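(* Let $q$ be a prime power. Then the subgroup of $\overline{\mathbb{Q}}^*$ generated by all $q$-Weil numbers of weight one has infinite rank.
   Context: A $q$-Weil number of weight one is an algebraic integer $\alpha\in\overline{\mathbb{Q}}$ such that $|\iota(\alpha)|=q^{1/2}$ for every embedding $\iota:\overline{\mathbb{Q}}\hookrightarrow\mathbb{C}$. *)

theory Defs
  imports "HOL-Computational_Algebra.Polynomial" Complex_Main
begin

text \<open>We realise the algebraic closure of Q as the set of algebraic complex numbers.\<close>

definition Qbar :: "complex set" where
  "Qbar = {x. algebraic x}"

definition algebraic_integer :: "complex \<Rightarrow> bool" where
  "algebraic_integer x \<longleftrightarrow>
     (\<exists>p :: complex poly. (\<forall>i. coeff p i \<in> \<int>) \<and> lead_coeff p = 1 \<and> poly p x = 0)"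

text \<open>Field embeddings of Qbar into C (only the values on Qbar matter).\<close>
definition qbar_embedding :: "(complex \<Rightarrow> complex) \<Rightarrow> bool" where
  "qbar_embedding \<sigma> \<longleftrightarrow>
     (\<forall>x\<in>Qbar. \<forall>y\<in>Qbar. \<sigma> (x + y) = \<sigma> x + \<sigma> y \<and> \<sigma> (x * y) = \<sigma> x * \<sigma> y)
     \<and> \<sigma> 1 = 1 \<and> inj_on \<sigma> Qbar"

definition weil_number :: "nat \<Rightarrow> complex \<Rightarrow> bool" where
  "weil_number q \<alpha> \<longleftrightarrow> \<alpha> \<in> Qbar \<and> algebraic_integer \<alpha> \<and>
     (\<forall>\<sigma>. qbar_embedding \<sigma> \<longrightarrow> cmod (\<sigma> \<alpha>) = sqrt (real q))"

inductive_set mult_subgroup_gen :: "complex set \<Rightarrow> complex set" for S where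
  one: "1 \<in> mult_subgroup_gen S"
| gen: "x \<in> S \<Longrightarrow> x \<in> mult_subgroup_gen S"
| mult: "x \<in> mult_subgroup_gen S \<Longrightarrow> y \<in> mult_subgroup_gen S \<Longrightarrow> x * y \<in> mult_subgroup_gen S"
| inv: "x \<in> mult_subgroup_gen S \<Longrightarrow> inverse x \<in> mult_subgroup_gen S"

definition mult_independent :: "complex set \<Rightarrow> bool" where
  "mult_independent A \<longleftrightarrow> finite A \<and>
     (\<forall>k :: complex \<Rightarrow> int. (\<Prod>a\<in>A. a powi k a) = 1 \<longrightarrow> (\<forall>a\<in>A. k a = 0))"

definition infinite_rank :: "complex set \<Rightarrow> bool" where
  "infinite_rank G \<longleftrightarrow> (\<forall>n. \<exists>A. A \<subseteq> G \<and> card A = n \<and> mult_independent A)"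

end

theory Submission
  imports Defs "HOL-Computational_Algebra.Nth_Powers"
begin

(* For a prime l > q let T = 2 q^l - l. The polynomial x^2 - T x + q^(2l) has negative
   discriminant D_l = -l (4 q^l - l), so under every embedding each root of
   x^(4l) - T x^(2l) + q^(2l) has absolute value sqrt q; hence the root
   beta_l = (T + sqrt D_l) / 2 is the (2l)-th power of a q-Weil number.
   Choose primes l_0 < l_1 < ... with |D_(l_i)| < l_(i+1). Then l_n divides D_(l_n) exactly once
   and divides no D_(l_j) with j < n, so no product of D_(l_n) with some of the D_(l_j) is a
   square, and adjoining the square roots one at a time shows that sqrt D_(l_n) is not in
   Q(sqrt D_(l_0), ..., sqrt D_(l_(n-1))).
   A multiplicative relation among beta_(l_0), ..., beta_(l_n) puts a nonzero power of beta_(l_n)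
   into that field. A prime p dividing q divides the norm but not the trace of beta_(l_n), so each
   positive power of beta_(l_n) is u + v beta_(l_n) with p not dividing v; thus beta_(l_n), and
   with it sqrt D_(l_n), would lie in the field. *)

section \<open>Powers of a root of an integral quadratic\<close>

lemma quadratic_root_times_linear:
  fixes \<beta> :: complex and T R u v :: int
  assumes "\<beta> ^ 2 = of_int T * \<beta> - of_int R"
  shows "\<beta> * (of_int u + of_int v * \<beta>) = of_int (- v * R) + of_int (u + v * T) * \<beta>"
proof -
  have "\<beta> * (of_int u + of_int v * \<beta>) = of_int u * \<beta> + of_int v * \<beta> ^ 2"
    by (simp add: power2_eq_square algebra_simps)
  also have "\<dots> = of_int (- v * R) + of_int (u + v * T) * \<beta>"
    by (simp add: assms algebra_simps)
  finally show ?thesis .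
qed

lemma quadratic_root_power_linear:
  fixes \<beta> :: complex and T R :: int
  assumes "\<beta> ^ 2 = of_int T * \<beta> - of_int R"
  shows "\<exists>u v. \<beta> ^ k = of_int u + of_int v * \<beta>"
proof (induction k)
  case 0
  have "\<beta> ^ 0 = of_int 1 + of_int 0 * \<beta>" by simp
  then show ?case by blast
next
  case (Suc k)
  then obtain u v where "\<beta> ^ k = of_int u + of_int v * \<beta>" by blast
  then have "\<beta> ^ Suc k = of_int (- v * R) + of_int (u + v * T) * \<beta>"
    using quadratic_root_times_linear[OF assms, of u v] by simp
  then show ?case by blast
qed

lemma quadratic_root_power_linear_mod_prime:
  fixes \<beta> :: complex and p T R :: int
  assumes root: "\<beta> ^ 2 = of_int T * \<beta> - of_int R"
    and "prime p" "p dvd R" "\<not> p dvd T" "k \<ge> 1"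
  shows "\<exists>u v. \<beta> ^ k = of_int u + of_int v * \<beta> \<and> p dvd u \<and> \<not> p dvd v"
  using \<open>k \<ge> 1\<close>
proof (induction k rule: dec_induct)
  case base
  have "\<not> p dvd 1" using \<open>prime p\<close> by (meson not_prime_unit)
  moreover have "\<beta> ^ 1 = of_int 0 + of_int 1 * \<beta>" by simp
  ultimately show ?case by blast
next
  case (step k)
  then obtain u v where uv: "\<beta> ^ k = of_int u + of_int v * \<beta>" "p dvd u" "\<not> p dvd v"
    by blast
  have "\<beta> ^ Suc k = of_int (- v * R) + of_int (u + v * T) * \<beta>"
    using quadratic_root_times_linear[OF root, of u v] uv(1) by simp
  moreover have "\<not> p dvd u + v * T"
    using uv(2,3) assms(2,4) by (simp add: prime_dvd_mult_iff dvd_add_right_iff)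
  moreover have "p dvd - v * R" using \<open>p dvd R\<close> by simp
  ultimately show ?case by blast
qed

lemma algebraic_quadratic_root_power:
  fixes \<beta> :: complex and T R :: int
  assumes root: "\<beta> ^ 2 = of_int T * \<beta> - of_int R"
  shows "algebraic (\<beta> ^ k)"
proof -
  obtain u v where uv: "\<beta> ^ k = of_int u + of_int v * \<beta>"
    using quadratic_root_power_linear[OF root] by blast
  \<comment> \<open>\<open>x = u + v \<beta>\<close> is a root of \<open>(x - u)\<^sup>2 - T v (x - u) + v\<^sup>2 R\<close>\<close>
  define P :: "complex poly"
    where "P = [:of_int (u ^ 2 + T * u * v + v ^ 2 * R), - of_int (2 * u + T * v), 1:]"
  show ?thesis
  proof (rule algebraicI[of P])
    show "coeff P i \<in> \<int>" for i
      by (auto simp: P_def coeff_pCons split: nat.split)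
    show "P \<noteq> 0" by (simp add: P_def)
    have "poly P (of_int u + of_int v * \<beta>) = of_int v ^ 2 * (\<beta> ^ 2 - of_int T * \<beta> + of_int R)"
      by (simp add: P_def power2_eq_square algebra_simps)
    then show "poly P (\<beta> ^ k) = 0"
      by (simp add: uv root)
  qed
qed

section \<open>Subfields generated by square roots\<close>

inductive_set subfield_gen :: "complex set \<Rightarrow> complex set" for A where
  rat: "x \<in> \<rat> \<Longrightarrow> x \<in> subfield_gen A"
| gen: "x \<in> A \<Longrightarrow> x \<in> subfield_gen A"
| add: "x \<in> subfield_gen A \<Longrightarrow> y \<in> subfield_gen A \<Longrightarrow> x + y \<in> subfield_gen A"
| mult: "x \<in> subfield_gen A \<Longrightarrow> y \<in> subfield_gen A \<Longrightarrow> x * y \<in> subfield_gen A"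
| minus: "x \<in> subfield_gen A \<Longrightarrow> - x \<in> subfield_gen A"
| inverse: "x \<in> subfield_gen A \<Longrightarrow> inverse x \<in> subfield_gen A"

lemma subfield_gen_of_int [simp, intro]: "of_int m \<in> subfield_gen A"
  by (rule subfield_gen.rat) simp

lemma subfield_gen_numeral [simp, intro]: "numeral m \<in> subfield_gen A"
  by (rule subfield_gen.rat) simp

lemma subfield_gen_diff: "x \<in> subfield_gen A \<Longrightarrow> y \<in> subfield_gen A \<Longrightarrow> x - y \<in> subfield_gen A"
  unfolding diff_conv_add_uminus by (intro subfield_gen.add subfield_gen.minus)

lemma subfield_gen_divide: "x \<in> subfield_gen A \<Longrightarrow> y \<in> subfield_gen A \<Longrightarrow> x / y \<in> subfield_gen A"
  unfolding divide_inverse by (intro subfield_gen.mult subfield_gen.inverse)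

lemmas subfield_gen_closed =
  subfield_gen.add subfield_gen.mult subfield_gen.minus subfield_gen.inverse
  subfield_gen_diff subfield_gen_divide subfield_gen_of_int subfield_gen_numeral

lemma subfield_gen_power: "x \<in> subfield_gen A \<Longrightarrow> x ^ k \<in> subfield_gen A"
  by (induction k) (auto intro: subfield_gen.intros)

lemma subfield_gen_power_int: "x \<in> subfield_gen A \<Longrightarrow> x powi k \<in> subfield_gen A"
  by (auto simp: power_int_def intro: subfield_gen_power subfield_gen.inverse)

lemma subfield_gen_prod: "(\<And>i. i \<in> I \<Longrightarrow> f i \<in> subfield_gen A) \<Longrightarrow> prod f I \<in> subfield_gen A"
  by (induction I rule: infinite_finite_induct) (auto intro: subfield_gen.intros)

lemma subfield_gen_empty: "x \<in> subfield_gen {} \<Longrightarrow> x \<in> \<rat>"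
  by (induction rule: subfield_gen.induct) auto

lemma square_of_rat_is_int_square:
  assumes "x \<in> \<rat>" "x ^ 2 = of_int b"
  shows "is_square b"
proof -
  have "algebraic_int x"
  proof (rule algebraic_int.intros[of "[:- of_int b, 0, 1:]"])
    show "\<forall>i. coeff [:- of_int b, 0, 1:] i \<in> \<int>"
      by (auto simp: coeff_pCons split: nat.splits)
  qed (use assms in \<open>auto simp: power2_eq_square\<close>)
  with assms(1) obtain m where "x = of_int m"
    using rational_algebraic_int_is_int by (auto elim: Ints_cases)
  with assms(2) have "b = m ^ 2"
    by (metis of_int_eq_iff of_int_power)
  then show ?thesis by (rule is_nth_powerI)
qed

lemma subfield_gen_insert_sqrt_repr:
  assumes t: "t ^ 2 \<in> subfield_gen A" and not_sq: "\<forall>y\<in>subfield_gen A. y ^ 2 \<noteq> t ^ 2"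
    and "x \<in> subfield_gen (insert t A)"
  shows "\<exists>y z. y \<in> subfield_gen A \<and> z \<in> subfield_gen A \<and> x = y + z * t"
  using \<open>x \<in> subfield_gen (insert t A)\<close>
proof (induction rule: subfield_gen.induct)
  case (rat x)
  show ?case
    by (rule exI[of _ x], rule exI[of _ 0]) (use rat in \<open>auto intro: subfield_gen.rat\<close>)
next
  case (gen x)
  then consider "x = t" | "x \<in> A" by blast
  then show ?case
  proof cases
    case 1
    show ?thesis
      by (rule exI[of _ 0], rule exI[of _ 1]) (use 1 in \<open>auto intro: subfield_gen.rat\<close>)
  next
    case 2
    show ?thesis
      by (rule exI[of _ x], rule exI[of _ 0])
        (use 2 in \<open>auto intro: subfield_gen.gen subfield_gen.rat\<close>)
  qed
next
  case (add x x')
  then obtain y z y' z' where yz: "y \<in> subfield_gen A" "z \<in> subfield_gen A"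
    "y' \<in> subfield_gen A" "z' \<in> subfield_gen A" "x = y + z * t" "x' = y' + z' * t"
    by blast
  show ?case
    by (rule exI[of _ "y + y'"], rule exI[of _ "z + z'"])
      (use yz in \<open>auto intro: subfield_gen.add simp: algebra_simps\<close>)
next
  case (mult x x')
  then obtain y z y' z' where yz: "y \<in> subfield_gen A" "z \<in> subfield_gen A"
    "y' \<in> subfield_gen A" "z' \<in> subfield_gen A" "x = y + z * t" "x' = y' + z' * t"
    by blast
  have "x * x' = (y * y' + z * z' * t ^ 2) + (y * z' + z * y') * t"
    using yz(5,6) by (simp add: algebra_simps power2_eq_square)
  moreover have "y * y' + z * z' * t ^ 2 \<in> subfield_gen A" "y * z' + z * y' \<in> subfield_gen A"
    using yz t by (auto intro!: subfield_gen_closed)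
  ultimately show ?case by blast
next
  case (minus x)
  then obtain y z where yz: "y \<in> subfield_gen A" "z \<in> subfield_gen A" "x = y + z * t"
    by blast
  show ?case
    by (rule exI[of _ "- y"], rule exI[of _ "- z"])
      (use yz in \<open>auto intro: subfield_gen.minus\<close>)
next
  case (inverse x)
  then obtain y z where yz: "y \<in> subfield_gen A" "z \<in> subfield_gen A" "x = y + z * t" by blast
  define N where "N = y ^ 2 - z ^ 2 * t ^ 2"
  have N_mem: "N \<in> subfield_gen A"
    using yz t by (auto simp: N_def intro!: subfield_gen_closed subfield_gen_power)
  show ?case
  proof (cases "N = 0")
    case True
    have "x = 0"
    proof (cases "z = 0")
      case True
      with \<open>N = 0\<close> yz(3) show ?thesis by (simp add: N_def)
    next
      case False
      with \<open>N = 0\<close> have "(y / z) ^ 2 = t ^ 2" by (simp add: N_def field_simps)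
      moreover have "y / z \<in> subfield_gen A" using yz by (intro subfield_gen_divide)
      ultimately show ?thesis using not_sq by blast
    qed
    then show ?thesis by (intro exI[of _ 0]) (auto intro: subfield_gen.rat)
  next
    case False
    \<comment> \<open>multiply by the conjugate \<open>y - z t\<close>\<close>
    have conj: "x * (y - z * t) = N" using yz(3) by (simp add: N_def algebra_simps power2_eq_square)
    with False have "x \<noteq> 0" by auto
    with conj False have "inverse x = y / N + (- z / N) * t"
      by (auto simp: field_simps)
    moreover have "y / N \<in> subfield_gen A" "- z / N \<in> subfield_gen A"
      using yz N_mem by (auto intro!: subfield_gen_closed)
    ultimately show ?thesis by blast
  qed
qed

lemma subfield_gen_insert_sqrt_not_square:
  assumes t: "t ^ 2 \<in> subfield_gen A" and b: "b \<in> subfield_gen A"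
    and not_sq_t: "\<forall>y\<in>subfield_gen A. y ^ 2 \<noteq> t ^ 2"
    and not_sq_b: "\<forall>y\<in>subfield_gen A. y ^ 2 \<noteq> b"
    and not_sq_bt: "\<forall>y\<in>subfield_gen A. y ^ 2 \<noteq> b * t ^ 2"
    and x: "x \<in> subfield_gen (insert t A)"
  shows "x ^ 2 \<noteq> b"
proof
  assume x_sq: "x ^ 2 = b"
  obtain y z where yz: "y \<in> subfield_gen A" "z \<in> subfield_gen A" "x = y + z * t"
    using subfield_gen_insert_sqrt_repr[OF t not_sq_t x] by blast
  have eq: "y ^ 2 + z ^ 2 * t ^ 2 + 2 * y * z * t = b"
    using x_sq yz(3) by (simp add: power2_eq_square algebra_simps)
  consider "y = 0" | "z = 0" | "y \<noteq> 0" "z \<noteq> 0" by blast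
  then show False
  proof cases
    case 1
    with eq have "(z * t ^ 2) ^ 2 = b * t ^ 2" by (simp add: power2_eq_square algebra_simps)
    moreover have "z * t ^ 2 \<in> subfield_gen A" using yz t by (intro subfield_gen.mult)
    ultimately show False using not_sq_bt by blast
  next
    case 2
    with eq yz(1) not_sq_b show False by simp
  next
    case 3
    with eq have "t = (b - y ^ 2 - z ^ 2 * t ^ 2) / (2 * y * z)" by (simp add: field_simps)
    also have "\<dots> \<in> subfield_gen A"
      using yz t b by (auto intro!: subfield_gen_closed subfield_gen_power)
    finally show False using not_sq_t by blast
  qed
qed

lemma subfield_gen_sqrts_not_square:
  fixes s :: "nat \<Rightarrow> complex" and D :: "nat \<Rightarrow> int"
  assumes sqrt: "\<And>i. s i ^ 2 = of_int (D i)"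
    and indep: "\<And>n S. S \<subseteq> {..<n} \<Longrightarrow> \<not> is_square (D n * prod D S)"
    and b: "\<And>S. S \<subseteq> {..<n} \<Longrightarrow> \<not> is_square (b * prod D S)"
    and x: "x \<in> subfield_gen (s ` {..<n})"
  shows "x ^ 2 \<noteq> of_int b"
  using b x
proof (induction n arbitrary: b x)
  case 0
  have "\<not> is_square b" using "0.prems"(1)[of "{}"] by simp
  moreover have "x \<in> \<rat>" using "0.prems"(2) subfield_gen_empty by simp
  ultimately show ?case using square_of_rat_is_int_square by blast
next
  case (Suc n)
  let ?F = "subfield_gen (s ` {..<n})"
  have not_sq_D: "\<forall>y\<in>?F. y ^ 2 \<noteq> s n ^ 2"
    unfolding sqrt using Suc.IH[of "D n"] indep by blast
  have "\<not> is_square (b * prod D S)" if "S \<subseteq> {..<n}" for S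
    using that by (intro Suc.prems(1)) auto
  then have not_sq_b: "\<forall>y\<in>?F. y ^ 2 \<noteq> of_int b"
    using Suc.IH by blast
  have "\<not> is_square (b * D n * prod D S)" if "S \<subseteq> {..<n}" for S
  proof -
    have "insert n S \<subseteq> {..<Suc n}" using that by auto
    moreover have "prod D (insert n S) = D n * prod D S"
      using that finite_subset by (subst prod.insert) auto
    ultimately show ?thesis using Suc.prems(1)[of "insert n S"] by (metis mult.assoc)
  qed
  then have not_sq_bD: "\<forall>y\<in>?F. y ^ 2 \<noteq> of_int b * s n ^ 2"
    unfolding sqrt using Suc.IH[of "b * D n"] by (metis of_int_mult)
  have x: "x \<in> subfield_gen (insert (s n) (s ` {..<n}))"
    using Suc.prems(2) by (simp add: lessThan_Suc)
  show ?case
    by (rule subfield_gen_insert_sqrt_not_square[OF _ _ not_sq_D not_sq_b not_sq_bD x])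
      (simp_all add: sqrt)
qed

section \<open>Multiplicative independence\<close>

lemma subfield_gen_quadratic_root_of_power:
  fixes \<beta> :: complex and p T R c :: int
  assumes root: "\<beta> ^ 2 = of_int T * \<beta> - of_int R"
    and "prime p" "p dvd R" "\<not> p dvd T"
    and pow: "\<beta> powi c \<in> subfield_gen A" and "c \<noteq> 0"
  shows "\<beta> \<in> subfield_gen A"
proof -
  define k where "k = nat \<bar>c\<bar>"
  have "k \<ge> 1" using \<open>c \<noteq> 0\<close> by (simp add: k_def)
  have "\<beta> powi c = \<beta> ^ k \<or> \<beta> ^ k = inverse (\<beta> powi c)"
    by (auto simp: k_def power_int_def power_inverse)
  then have "\<beta> ^ k \<in> subfield_gen A"
    using pow subfield_gen.inverse by metis
  obtain u v where uv: "\<beta> ^ k = of_int u + of_int v * \<beta>" "\<not> p dvd v"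
    using quadratic_root_power_linear_mod_prime[OF root assms(2-4) \<open>k \<ge> 1\<close>] by blast
  then have "v \<noteq> 0" by auto
  with uv(1) have "\<beta> = (\<beta> ^ k - of_int u) / of_int v" by simp
  also have "\<dots> \<in> subfield_gen A"
    using \<open>\<beta> ^ k \<in> subfield_gen A\<close> by (intro subfield_gen_closed)
  finally show ?thesis .
qed

lemma quadratic_roots_mult_independent:
  fixes \<beta> :: "nat \<Rightarrow> complex" and T R D :: "nat \<Rightarrow> int" and p :: int
  assumes root: "\<And>i. \<beta> i ^ 2 = of_int (T i) * \<beta> i - of_int (R i)"
    and disc: "\<And>i. D i = T i ^ 2 - 4 * R i"
    and indep: "\<And>n S. S \<subseteq> {..<n} \<Longrightarrow> \<not> is_square (D n * prod D S)"
    and p: "prime p" "\<And>i. p dvd R i" "\<And>i. \<not> p dvd T i"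
  shows "(\<Prod>i<n. \<beta> i powi c i) = 1 \<Longrightarrow> \<forall>i<n. c i = 0"
proof (induction n)
  case 0
  then show ?case by simp
next
  case (Suc n)
  define s where "s i = 2 * \<beta> i - of_int (T i)" for i
  have sqrt: "s i ^ 2 = of_int (D i)" for i
  proof -
    have "s i ^ 2 = 4 * (\<beta> i ^ 2 - of_int (T i) * \<beta> i) + of_int (T i) ^ 2"
      by (simp add: s_def power2_eq_square algebra_simps)
    then show ?thesis by (simp add: root disc)
  qed
  let ?F = "subfield_gen (s ` {..<n})"
  have "c n = 0"
  proof (rule ccontr)
    assume "c n \<noteq> 0"
    have "(\<Prod>i<n. \<beta> i powi c i) * \<beta> n powi c n = 1"
      using Suc.prems by simp
    then have "\<beta> n powi c n = inverse (\<Prod>i<n. \<beta> i powi c i)"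
      by (simp add: inverse_unique)
    also have "\<dots> \<in> ?F"
    proof (intro subfield_gen.inverse subfield_gen_prod subfield_gen_power_int)
      fix i assume "i \<in> {..<n}"
      then have "s i \<in> ?F" by (auto intro: subfield_gen.gen)
      then have "(of_int (T i) + s i) / 2 \<in> ?F" by (intro subfield_gen_closed)
      then show "\<beta> i \<in> ?F" by (simp add: s_def)
    qed
    finally have "\<beta> n \<in> ?F"
      using subfield_gen_quadratic_root_of_power root p \<open>c n \<noteq> 0\<close> by blast
    then have "s n \<in> ?F"
      unfolding s_def by (auto intro: subfield_gen_closed)
    moreover have "\<not> is_square (D n * prod D S)" if "S \<subseteq> {..<n}" for S
      using indep that .
    ultimately show False
      using subfield_gen_sqrts_not_square[OF sqrt indep] sqrt by blast
  qed
  with Suc show ?case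
    by (simp add: less_Suc_eq)
qed

lemma infinite_rank_if_independent_sequence:
  fixes \<beta> :: "nat \<Rightarrow> complex"
  assumes "range \<beta> \<subseteq> G" and nonzero: "\<And>i. \<beta> i \<noteq> 0"
    and indep: "\<And>n c. (\<Prod>i<n. \<beta> i powi c i) = 1 \<Longrightarrow> \<forall>i<n. c i = 0"
  shows "infinite_rank G"
  unfolding infinite_rank_def
proof
  have "inj \<beta>"
  proof (rule linorder_injI)
    fix i j :: nat assume "i < j"
    define c :: "nat \<Rightarrow> int" where "c m = (if m = i then 1 else if m = j then -1 else 0)" for m
    have "(\<Prod>m<j. \<beta> m powi c m) = (\<Prod>m<j. if m = i then \<beta> m else 1)"
      by (rule prod.cong) (auto simp: c_def)
    also have "\<dots> = \<beta> i" using \<open>i < j\<close> by simp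
    finally have "(\<Prod>m<Suc j. \<beta> m powi c m) = \<beta> i / \<beta> j"
      using \<open>i < j\<close> by (simp add: c_def divide_inverse)
    moreover have "(\<Prod>m<Suc j. \<beta> m powi c m) \<noteq> 1"
      using indep[of c "Suc j"] \<open>i < j\<close> by (force simp: c_def)
    ultimately show "\<beta> i \<noteq> \<beta> j" using nonzero[of j] by force
  qed
  fix n
  let ?A = "\<beta> ` {..<n}"
  have inj_A: "inj_on \<beta> {..<n}"
    using \<open>inj \<beta>\<close> by (rule inj_on_subset) simp
  then have "card ?A = n"
    by (simp add: card_image)
  moreover have "mult_independent ?A"
    unfolding mult_independent_def
  proof (intro conjI allI impI ballI)
    fix k :: "complex \<Rightarrow> int" and a
    assume "(\<Prod>a\<in>?A. a powi k a) = 1" "a \<in> ?A"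
    moreover have "(\<Prod>a\<in>?A. a powi k a) = (\<Prod>i<n. \<beta> i powi k (\<beta> i))"
      using inj_A by (simp add: prod.reindex)
    ultimately show "k a = 0"
      using indep[of "k \<circ> \<beta>" n] by auto
  qed simp
  moreover have "?A \<subseteq> G" using \<open>range \<beta> \<subseteq> G\<close> by auto
  ultimately show "\<exists>A\<subseteq>G. card A = n \<and> mult_independent A"
    by blast
qed

section \<open>A criterion for Weil numbers\<close>

lemma qbar_embedding_add:
  "qbar_embedding \<sigma> \<Longrightarrow> algebraic x \<Longrightarrow> algebraic y \<Longrightarrow> \<sigma> (x + y) = \<sigma> x + \<sigma> y"
  by (simp add: qbar_embedding_def Qbar_def)

lemma qbar_embedding_mult:
  "qbar_embedding \<sigma> \<Longrightarrow> algebraic x \<Longrightarrow> algebraic y \<Longrightarrow> \<sigma> (x * y) = \<sigma> x * \<sigma> y"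
  by (simp add: qbar_embedding_def Qbar_def)

lemma qbar_embedding_0: "qbar_embedding \<sigma> \<Longrightarrow> \<sigma> 0 = 0"
  using qbar_embedding_add[of \<sigma> 0 0] by simp

lemma qbar_embedding_uminus:
  assumes "qbar_embedding \<sigma>" "algebraic x"
  shows "\<sigma> (- x) = - \<sigma> x"
proof -
  have "\<sigma> x + \<sigma> (- x) = \<sigma> (x + - x)"
    using assms by (intro qbar_embedding_add[symmetric]) auto
  then show ?thesis by (simp add: qbar_embedding_0[OF assms(1)] add_eq_0_iff)
qed

lemma qbar_embedding_of_nat: "qbar_embedding \<sigma> \<Longrightarrow> \<sigma> (of_nat n) = of_nat n"
proof (induction n)
  case 0
  then show ?case by (simp add: qbar_embedding_0)
next
  case (Suc n)
  then have "\<sigma> (of_nat n + 1) = \<sigma> (of_nat n) + \<sigma> 1"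
    by (intro qbar_embedding_add) (auto intro: rat_imp_algebraic)
  with Suc show ?case by (simp add: qbar_embedding_def add.commute)
qed

lemma qbar_embedding_of_int:
  assumes "qbar_embedding \<sigma>"
  shows "\<sigma> (of_int n) = of_int n"
proof (cases "n \<ge> 0")
  case True
  then show ?thesis using qbar_embedding_of_nat[OF assms, of "nat n"] by simp
next
  case False
  then have "of_int n = - (of_nat (nat (- n)) :: complex)" by simp
  then show ?thesis
    using qbar_embedding_uminus[OF assms] qbar_embedding_of_nat[OF assms] by simp
qed

lemma qbar_embedding_power:
  assumes "qbar_embedding \<sigma>" and alg: "\<And>j. algebraic (x ^ j)"
  shows "\<sigma> (x ^ k) = \<sigma> x ^ k"
proof (induction k)
  case 0
  then show ?case using assms(1) by (simp add: qbar_embedding_def)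
next
  case (Suc k)
  have "\<sigma> (x * x ^ k) = \<sigma> x * \<sigma> (x ^ k)"
    using qbar_embedding_mult[OF assms(1)] alg[of 1] alg[of k] by simp
  with Suc show ?case by simp
qed

lemma cmod_root_of_real_quadratic:
  fixes y :: complex and T R :: real
  assumes root: "y ^ 2 = of_real T * y - of_real R" and neg_disc: "T ^ 2 < 4 * R"
  shows "cmod y ^ 2 = R"
proof -
  define a b where "a = Re y" and "b = Im y"
  have re: "a * a - b * b = T * a - R" and im: "2 * a * b = T * b"
    using arg_cong[OF root, of Re] arg_cong[OF root, of Im]
    by (simp_all add: a_def b_def power2_eq_square)
  have "b \<noteq> 0"
  proof
    assume "b = 0"
    with re have "(a - T / 2) ^ 2 + (R - T ^ 2 / 4) = 0"
      by (simp add: power2_eq_square algebra_simps)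
    moreover have "(a - T / 2) ^ 2 \<ge> 0" by simp
    ultimately show False using neg_disc by linarith
  qed
  with im have "2 * a * a = T * a" by simp
  with re have "a * a + b * b = R" by linarith
  then show ?thesis by (simp add: cmod_power2 a_def b_def flip: power2_eq_square)
qed

lemma algebraic_integer_if_trinomial_root:
  fixes \<alpha> :: complex and T :: int and R N :: nat
  assumes "N > 0" and root: "\<alpha> ^ (2 * N) + of_nat R = of_int T * \<alpha> ^ N"
  shows "algebraic_integer \<alpha>"
  unfolding algebraic_integer_def
proof (intro exI conjI allI)
  define P :: "complex poly" where "P = ([:of_nat R:] - monom (of_int T) N) + monom 1 (2 * N)"
  show "coeff P i \<in> \<int>" for i
    by (auto simp: P_def coeff_monom coeff_pCons split: nat.split)
  have "degree ([:of_nat R:] - monom (of_int T) N :: complex poly) \<le> N"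
    by (rule degree_diff_le) (simp_all add: degree_monom_le)
  with \<open>N > 0\<close> have "degree ([:of_nat R:] - monom (of_int T) N :: complex poly) < 2 * N"
    by linarith
  then show "lead_coeff P = 1"
    unfolding P_def by (subst lead_coeff_add_le) (simp_all add: degree_monom_eq)
  have "poly P \<alpha> = (\<alpha> ^ (2 * N) + of_nat R) - of_int T * \<alpha> ^ N"
    by (simp add: P_def poly_monom)
  then show "poly P \<alpha> = 0"
    using root by simp
qed

lemma qbar_embedding_trinomial_root:
  fixes \<alpha> :: complex and T :: int and R N :: nat
  assumes \<sigma>: "qbar_embedding \<sigma>" and alg: "\<And>j. algebraic (\<alpha> ^ j)"
    and root: "\<alpha> ^ (2 * N) + of_nat R = of_int T * \<alpha> ^ N"
  shows "(\<sigma> \<alpha> ^ N) ^ 2 + of_nat R = of_int T * \<sigma> \<alpha> ^ N"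
proof -
  have "\<sigma> (\<alpha> ^ (2 * N)) + \<sigma> (of_nat R) = \<sigma> (of_int T) * \<sigma> (\<alpha> ^ N)"
    using arg_cong[OF root, of \<sigma>] alg
    by (simp add: qbar_embedding_add[OF \<sigma>] qbar_embedding_mult[OF \<sigma>] rat_imp_algebraic)
  moreover have "\<sigma> (\<alpha> ^ (2 * N)) = (\<sigma> \<alpha> ^ N) ^ 2"
    unfolding qbar_embedding_power[OF \<sigma> alg] by (simp add: power_mult mult.commute)
  ultimately show ?thesis
    by (simp only: qbar_embedding_power[OF \<sigma> alg] qbar_embedding_of_nat[OF \<sigma>]
        qbar_embedding_of_int[OF \<sigma>])
qed

lemma weil_number_if_power_quadratic_root:
  fixes \<alpha> \<beta> :: complex and T :: int and q N :: nat
  assumes "N > 0" and \<alpha>\<beta>: "\<alpha> ^ N = \<beta>"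
    and root: "\<beta> ^ 2 = of_int T * \<beta> - of_nat (q ^ N)"
    and neg_disc: "T ^ 2 < 4 * int q ^ N"
  shows "weil_number q \<alpha>"
  unfolding weil_number_def
proof (intro conjI allI impI)
  have alg: "algebraic (\<alpha> ^ j)" for j
  proof (rule algebraic_root[of _ "monom 1 N"])
    have "\<beta> ^ 2 = of_int T * \<beta> - of_int (int (q ^ N))"
      using root by simp
    then show "algebraic ((\<alpha> ^ j) ^ N)"
      using algebraic_quadratic_root_power \<alpha>\<beta> by (metis power_mult mult.commute)
  qed (use \<open>N > 0\<close> in \<open>auto simp: poly_monom coeff_monom degree_monom_eq\<close>)
  show "\<alpha> \<in> Qbar"
    using alg[of 1] by (simp add: Qbar_def)
  have \<alpha>_root: "\<alpha> ^ (2 * N) + of_nat (q ^ N) = of_int T * \<alpha> ^ N"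
    using root by (simp add: \<alpha>\<beta> power_mult mult.commute[of 2] flip: \<alpha>\<beta>)
  show "algebraic_integer \<alpha>"
    using algebraic_integer_if_trinomial_root[OF \<open>N > 0\<close> \<alpha>_root] .
  fix \<sigma> assume \<sigma>: "qbar_embedding \<sigma>"
  have "(\<sigma> \<alpha> ^ N) ^ 2 = of_real (of_int T) * \<sigma> \<alpha> ^ N - of_real (real q ^ N)"
    using qbar_embedding_trinomial_root[OF \<sigma> alg \<alpha>_root] by (simp add: algebra_simps)
  moreover have "real_of_int (T ^ 2) < real_of_int (4 * int q ^ N)"
    using neg_disc by (simp only: of_int_less_iff)
  then have "real_of_int T ^ 2 < 4 * real q ^ N"
    by simp
  ultimately have "cmod (\<sigma> \<alpha> ^ N) ^ 2 = real q ^ N"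
    by (rule cmod_root_of_real_quadratic)
  have "cmod (\<sigma> \<alpha>) ^ (2 * N) = cmod (\<sigma> \<alpha> ^ N) ^ 2"
    by (simp add: norm_power power_mult mult.commute[of 2])
  also have "\<dots> = sqrt (real q) ^ (2 * N)"
    using \<open>cmod (\<sigma> \<alpha> ^ N) ^ 2 = real q ^ N\<close> by (simp add: power_mult)
  finally have "cmod (\<sigma> \<alpha>) ^ (2 * N) = sqrt (real q) ^ (2 * N)" .
  then show "cmod (\<sigma> \<alpha>) = sqrt (real q)"
    by (rule power_eq_imp_eq_base) (use \<open>N > 0\<close> in auto)
qed

lemma exists_complex_root:
  fixes w :: complex
  assumes "N > 0"
  shows "\<exists>z. z ^ N = w"
proof
  show "rcis (root N (cmod w)) (Arg w / real N) ^ N = w"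
    using assms by (simp add: DeMoivre2 rcis_cmod_Arg)
qed

section \<open>The construction\<close>

lemma mult_subgroup_gen_power: "x \<in> mult_subgroup_gen S \<Longrightarrow> x ^ k \<in> mult_subgroup_gen S"
  by (induction k) (auto intro: mult_subgroup_gen.intros)

lemma not_square_mult_if_exact_prime_factor:
  fixes l a b :: int
  assumes "prime l" "l dvd a" "\<not> l ^ 2 dvd a" "\<not> l dvd b"
  shows "\<not> is_square (a * b)"
proof
  assume "is_square (a * b)"
  then obtain m where m: "a * b = m ^ 2" by (auto elim: is_nth_powerE)
  with \<open>l dvd a\<close> have "l dvd m ^ 2" by (metis dvd_mult2)
  then have "l ^ 2 dvd a * b"
    unfolding m using \<open>prime l\<close> by (simp add: dvd_power_same prime_dvd_power)
  moreover have "coprime (l ^ 2) b"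
    using assms(1,4) by (simp add: prime_imp_coprime)
  ultimately show False
    using \<open>\<not> l ^ 2 dvd a\<close> by (simp add: coprime_dvd_mult_left_iff)
qed

lemma exists_prime_sequence:
  fixes f :: "nat \<Rightarrow> int"
  shows "\<exists>ls. \<forall>i. prime (ls i) \<and> N < ls i \<and> f (ls i) < int (ls (Suc i))"
proof -
  have "\<exists>ls. \<forall>i. (prime (ls i) \<and> N < ls i) \<and> f (ls i) < int (ls (Suc i))"
  proof (rule dependent_nat_choice)
    show "\<exists>l. prime l \<and> N < l" by (rule bigger_prime)
    show "\<exists>l'. (prime l' \<and> N < l') \<and> f l < int l'" for l
      using bigger_prime[of "max N (nat (f l))"] by auto
  qed
  then show ?thesis by auto
qed

locale weil_construction =
  fixes q :: nat
  assumes q_ge_2: "q \<ge> 2"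
begin

definition weil_trace :: "nat \<Rightarrow> int" where
  "weil_trace l = 2 * int q ^ l - int l"

definition weil_disc :: "nat \<Rightarrow> int" where
  "weil_disc l = weil_trace l ^ 2 - 4 * int q ^ (2 * l)"

definition weil_beta :: "nat \<Rightarrow> complex" where
  "weil_beta l = (of_int (weil_trace l) + \<i> * of_real (sqrt (- weil_disc l))) / 2"

lemma less_q_power: "int l < int q ^ l"
proof -
  have "l < 2 ^ l" by (rule less_exp)
  also have "(2::nat) ^ l \<le> q ^ l" using q_ge_2 by (rule power_mono) simp
  finally show ?thesis by (metis of_nat_less_iff of_nat_power)
qed

lemma weil_disc_eq: "weil_disc l = - (int l * (4 * int q ^ l - int l))"
  by (simp add: weil_disc_def weil_trace_def power2_eq_square power_mult algebra_simps)

lemma weil_disc_le: "weil_disc l \<le> - int l"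
proof -
  have "1 \<le> 4 * int q ^ l - int l" using less_q_power[of l] by linarith
  then have "int l \<le> int l * (4 * int q ^ l - int l)"
    using mult_left_mono[of 1] by fastforce
  then show ?thesis by (simp add: weil_disc_eq)
qed

lemma weil_beta_root: "weil_beta l ^ 2 = of_int (weil_trace l) * weil_beta l - of_nat (q ^ (2 * l))"
proof -
  have "0 \<le> - real_of_int (weil_disc l)" using weil_disc_le[of l] by simp
  then have "(complex_of_real (sqrt (- weil_disc l))) ^ 2 = - of_int (weil_disc l)"
    by (simp flip: of_real_power)
  moreover have "2 * weil_beta l - of_int (weil_trace l) = \<i> * of_real (sqrt (- weil_disc l))"
    by (simp add: weil_beta_def field_simps)
  ultimately have "(2 * weil_beta l - of_int (weil_trace l)) ^ 2 = of_int (weil_disc l)"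
    by (simp add: power_mult_distrib)
  then have "4 * (weil_beta l ^ 2 - of_int (weil_trace l) * weil_beta l + of_nat (q ^ (2 * l))) = 0"
    by (simp add: weil_disc_def power2_eq_square algebra_simps)
  then have "weil_beta l ^ 2 - of_int (weil_trace l) * weil_beta l + of_nat (q ^ (2 * l)) = 0"
    by (simp only: mult_eq_0_iff) simp
  then show ?thesis
    by (subst eq_iff_diff_eq_0) (simp add: algebra_simps)
qed

lemma weil_beta_nonzero: "weil_beta l \<noteq> 0"
  using weil_beta_root[of l] q_ge_2 by auto

lemma weil_beta_in_weil_subgroup:
  assumes "l \<ge> 1"
  shows "weil_beta l \<in> mult_subgroup_gen {\<alpha>. weil_number q \<alpha>}"
proof -
  obtain \<alpha> where \<alpha>: "\<alpha> ^ (2 * l) = weil_beta l"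
    using exists_complex_root[of "2 * l"] assms by auto
  have "weil_trace l ^ 2 < 4 * int q ^ (2 * l)"
    using weil_disc_le[of l] assms by (simp add: weil_disc_def)
  then have "weil_number q \<alpha>"
    using weil_number_if_power_quadratic_root[OF _ \<alpha> weil_beta_root] assms by simp
  then show ?thesis
    using mult_subgroup_gen.gen mult_subgroup_gen_power \<alpha> by (metis mem_Collect_eq)
qed

lemma prime_exact_dvd_weil_disc:
  assumes "prime l" "q < l"
  shows "int l dvd weil_disc l" "\<not> (int l) ^ 2 dvd weil_disc l"
proof -
  show "int l dvd weil_disc l" by (simp add: weil_disc_eq)
  show "\<not> (int l) ^ 2 dvd weil_disc l"
  proof
    assume "(int l) ^ 2 dvd weil_disc l"
    then have "int l dvd 4 * int q ^ l - int l"
      using \<open>prime l\<close> by (simp add: weil_disc_eq power2_eq_square)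
    then have "int l dvd (4 * int q ^ l - int l) + int l"
      by (rule dvd_add) simp
    then have "int l dvd int (2 ^ 2 * q ^ l)"
      by simp
    then have "l dvd 2 ^ 2 * q ^ l"
      by (simp only: int_dvd_int_iff)
    then have "l dvd 2 \<or> l dvd q"
      using \<open>prime l\<close> by (meson prime_dvd_mult_iff prime_dvd_power)
    moreover have "\<not> l dvd q" "\<not> l dvd 2"
      using assms q_ge_2 by (auto dest: dvd_imp_le)
    ultimately show False by blast
  qed
qed

lemma prime_not_dvd_weil_trace:
  assumes "prime p" "p dvd q" "prime l" "q < l"
  shows "\<not> int p dvd weil_trace l"
proof
  assume "int p dvd weil_trace l"
  moreover have "int p dvd 2 * int q ^ l"
  proof -
    have "int q dvd int q ^ l" using \<open>q < l\<close> by (simp add: dvd_power)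
    with \<open>p dvd q\<close> have "int p dvd int q ^ l" by (meson dvd_trans int_dvd_int_iff)
    then show ?thesis by simp
  qed
  ultimately have "p dvd l"
    by (simp add: weil_trace_def dvd_diff_right_iff flip: int_dvd_int_iff)
  then have "p = l" using assms(1,3) by (simp add: primes_dvd_imp_eq)
  moreover have "p \<le> q" using assms(2) q_ge_2 by (simp add: dvd_imp_le)
  ultimately show False using \<open>q < l\<close> by simp
qed

lemma weil_disc_product_not_square:
  assumes prime: "\<And>i. prime (ls i)" and large: "\<And>i. q < ls i"
    and growth: "\<And>i. \<bar>weil_disc (ls i)\<bar> < int (ls (Suc i))"
    and "S \<subseteq> {..<n}"
  shows "\<not> is_square (weil_disc (ls n) * (\<Prod>j\<in>S. weil_disc (ls j)))"
proof (rule not_square_mult_if_exact_prime_factor)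
  show "prime (int (ls n))" "int (ls n) dvd weil_disc (ls n)"
    "\<not> (int (ls n))\<^sup>2 dvd weil_disc (ls n)"
    using prime large prime_exact_dvd_weil_disc by auto
  have "ls i < ls (Suc i)" for i
    using growth[of i] weil_disc_le[of "ls i"] by linarith
  then have "mono ls" by (simp add: mono_iff_le_Suc less_imp_le)
  have "\<not> int (ls n) dvd weil_disc (ls j)" if "j \<in> S" for j
  proof
    assume "int (ls n) dvd weil_disc (ls j)"
    moreover have "weil_disc (ls j) \<noteq> 0"
      using weil_disc_le[of "ls j"] large[of j] by linarith
    ultimately have "\<bar>int (ls n)\<bar> \<le> \<bar>weil_disc (ls j)\<bar>"
      by (rule dvd_imp_le_int[rotated])
    moreover have "ls (Suc j) \<le> ls n"
      using \<open>mono ls\<close> that \<open>S \<subseteq> {..<n}\<close> by (auto simp: mono_def)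
    ultimately show False using growth[of j] by simp
  qed
  then show "\<not> int (ls n) dvd (\<Prod>j\<in>S. weil_disc (ls j))"
    using prime[of n] \<open>S \<subseteq> {..<n}\<close> finite_subset
    by (subst prime_dvd_prod_iff) auto
qed

lemma weil_beta_mult_independent:
  assumes prime: "\<And>i. prime (ls i)" and large: "\<And>i. q < ls i"
    and growth: "\<And>i. \<bar>weil_disc (ls i)\<bar> < int (ls (Suc i))"
    and rel: "(\<Prod>i<n. weil_beta (ls i) powi c i) = 1"
  shows "\<forall>i<n. c i = 0"
proof -
  obtain p where p: "prime p" "p dvd q"
    using prime_factor_nat[of q] q_ge_2 by auto
  then have "int p dvd int q" by simp
  then have "int p dvd int q ^ (2 * ls i)" for i
    by (rule dvd_trans) (use large[of i] in \<open>simp add: dvd_power\<close>)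
  moreover have "\<not> int p dvd weil_trace (ls i)" for i
    using prime_not_dvd_weil_trace p prime large by simp
  moreover have "weil_beta (ls i) ^ 2
      = of_int (weil_trace (ls i)) * weil_beta (ls i) - of_int (int q ^ (2 * ls i))" for i
    using weil_beta_root[of "ls i"] by simp
  moreover have "\<not> is_square (weil_disc (ls n) * (\<Prod>j\<in>S. weil_disc (ls j)))"
    if "S \<subseteq> {..<n}" for n S
    using weil_disc_product_not_square[of ls, OF prime large growth that] .
  ultimately show ?thesis
    using quadratic_roots_mult_independent[where \<beta> = "weil_beta \<circ> ls" and T = "weil_trace \<circ> ls"
        and R = "\<lambda>i. int q ^ (2 * ls i)" and D = "weil_disc \<circ> ls" and p = "int p"] rel p(1)
    by (simp add: weil_disc_def)
qed

theorem infinite_rank_weil_subgroup: "infinite_rank (mult_subgroup_gen {\<alpha>. weil_number q \<alpha>})"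
proof -
  obtain ls where ls: "\<And>i. prime (ls i)" "\<And>i. q < ls i"
    "\<And>i. \<bar>weil_disc (ls i)\<bar> < int (ls (Suc i))"
    using exists_prime_sequence[of q "\<lambda>l. \<bar>weil_disc l\<bar>"] by blast
  show ?thesis
  proof (rule infinite_rank_if_independent_sequence)
    have "weil_beta (ls i) \<in> mult_subgroup_gen {\<alpha>. weil_number q \<alpha>}" for i
      using weil_beta_in_weil_subgroup[of "ls i"] ls(2)[of i] by simp
    then show "range (weil_beta \<circ> ls) \<subseteq> mult_subgroup_gen {\<alpha>. weil_number q \<alpha>}"
      by auto
    show "(weil_beta \<circ> ls) i \<noteq> 0" for i
      by (simp add: weil_beta_nonzero)
    show "\<forall>i<n. c i = 0" if "(\<Prod>i<n. (weil_beta \<circ> ls) i powi c i) = 1" for n c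
      using weil_beta_mult_independent[of ls, OF ls] that by simp
  qed
qed

end

theorem corollary3p9:
  fixes q :: nat
  assumes "\<exists>p k. prime p \<and> k \<ge> 1 \<and> q = p ^ k"
  shows "infinite_rank (mult_subgroup_gen {\<alpha>. weil_number q \<alpha>})"
proof (rule weil_construction.infinite_rank_weil_subgroup, unfold_locales)
  obtain p k where "prime p" "k \<ge> 1" "q = p ^ k" using assms by blast
  moreover have "2 \<le> p" using \<open>prime p\<close> by (rule prime_ge_2_nat)
  ultimately show "q \<ge> 2" using self_le_power[of p k] by simp
qed

end
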